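(* Let $U\in\mathcal{U}_N$ be a unitary acting non-trivially only on the qubits in $R\subseteq[n]$ (i.e. $U=U_R\otimes I_{\overline{R}}$), and let $\varepsilon>0$. Consider the procedure that repeats $t=O\!\left(\frac{\log|R|}{\varepsilon}\right)$ times: prepare the Choi–Jamiołkowski state $|v(U)\rangle$ (one query to $U$), measure all $2n$ qubits in the Bell basis $\{|v(\sigma_x)\rangle\}_{x\in\mathbb{Z}_4^n}$, and add $\mathrm{supp}(x)$ of the outcome $x$ to a set $S$ (initially empty); finally output $S$. This procedure makes $t$ queries to $U$ and, with high probability, outputs $S\subseteq[n]$ such that (1) $S$ contains every qubit $i\in[n]$ with $\mathrm{Inf}_i[U]\ge\varepsilon$, and (2) every $i\in S$ satisfies $\mathrm{Inf}_i[U]>0$.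
   Context: $N=2^n$, $\mathcal{U}_N$ is the set of $N\times N$ unitaries. For $x\in\mathbb{Z}_4^n$, $\sigma_x=\sigma_{x_1}\otimes\cdots\otimes\sigma_{x_n}$ with $\sigma_0=I,\sigma_1=X,\sigma_2=Y,\sigma_3=Z$, and $\mathrm{supp}(x)=\{i:x_i\ne0\}$. Writing $U=\sum_x\widehat{U}(x)\sigma_x$, $\mathrm{Inf}_i[U]=\sum_{x:\,x_i\ne0}|\widehat{U}(x)|^2$. The Choi–Jamiołkowski state of an $N\times N$ matrix $A$ is $|v(A)\rangle=(A\otimes I)\frac{1}{\sqrt N}\sum_{i=0}^{N-1}|i\rangle|i\rangle$; the states $|v(\sigma_x)\rangle$, $x\in\mathbb{Z}_4^n$, form an orthonormal basis of $\mathbb{C}^N\otimes\mathbb{C}^N$. *)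

theory Defs
  imports Complex_Main
begin

text \<open>Qubits are indexed by 0..n-1; a computational basis index a < 2^n
  has qubit i given by bit i of a.\<close>

definition qbit :: "nat \<Rightarrow> nat \<Rightarrow> nat" where
  "qbit a i = (a div 2 ^ i) mod 2"

text \<open>Single-qubit Paulis sigma_0 = I, sigma_1 = X, sigma_2 = Y, sigma_3 = Z.\<close>
definition pauli1 :: "nat \<Rightarrow> nat \<Rightarrow> nat \<Rightarrow> complex" where
  "pauli1 k r c =
     (if k = 0 then (if r = c then 1 else 0)
      else if k = 1 then (if r \<noteq> c then 1 else 0)
      else if k = 2 then (if r = 0 \<and> c = 1 then - \<i> else if r = 1 \<and> c = 0 then \<i> else 0)
      else (if r = c then (if r = 0 then 1 else -1) else 0))"

text \<open>Elements of Z_4^n are lists of length n with entries < 4.\<close>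
definition pstrings :: "nat \<Rightarrow> nat list set" where
  "pstrings n = {x. length x = n \<and> (\<forall>k\<in>set x. k < 4)}"

definition supp :: "nat list \<Rightarrow> nat set" where
  "supp x = {i. i < length x \<and> x ! i \<noteq> 0}"

definition pauli :: "nat \<Rightarrow> nat list \<Rightarrow> nat \<Rightarrow> nat \<Rightarrow> complex" where
  "pauli n x a b = (\<Prod>i<n. pauli1 (x ! i) (qbit a i) (qbit b i))"

definition unitary :: "nat \<Rightarrow> (nat \<Rightarrow> nat \<Rightarrow> complex) \<Rightarrow> bool" where
  "unitary n U \<longleftrightarrow> (\<forall>a<2^n. \<forall>b<2^n.
      (\<Sum>k<2^n. cnj (U k a) * U k b) = (if a = b then 1 else 0))"

text \<open>U = U_R \<otimes> I on the complement of R.\<close>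
definition acts_only_on :: "nat \<Rightarrow> (nat \<Rightarrow> nat \<Rightarrow> complex) \<Rightarrow> nat set \<Rightarrow> bool" where
  "acts_only_on n U R \<longleftrightarrow> (\<exists>V :: (nat \<Rightarrow> nat) \<Rightarrow> (nat \<Rightarrow> nat) \<Rightarrow> complex.
     \<forall>a<2^n. \<forall>b<2^n.
       U a b = V (\<lambda>i. if i \<in> R then qbit a i else 0) (\<lambda>i. if i \<in> R then qbit b i else 0)
               * (if (\<forall>i<n. i \<notin> R \<longrightarrow> qbit a i = qbit b i) then 1 else 0))"

text \<open>Pauli coefficient: U = sum_x hatU(x) sigma_x, hatU(x) = tr(sigma_x^dagger U)/N.\<close>
definition fourier :: "nat \<Rightarrow> (nat \<Rightarrow> nat \<Rightarrow> complex) \<Rightarrow> nat list \<Rightarrow> complex" where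
  "fourier n U x = (\<Sum>a<2^n. \<Sum>b<2^n. cnj (pauli n x b a) * U b a) / of_nat (2^n)"

definition Inf :: "nat \<Rightarrow> (nat \<Rightarrow> nat \<Rightarrow> complex) \<Rightarrow> nat \<Rightarrow> real" where
  "Inf n U i = (\<Sum>x\<in>{x\<in>pstrings n. x ! i \<noteq> 0}. (cmod (fourier n U x))^2)"

text \<open>Choi--Jamiolkowski state (A \<otimes> I) N^{-1/2} sum_i |i>|i>, amplitude at |a>|c>.\<close>
definition choi :: "nat \<Rightarrow> (nat \<Rightarrow> nat \<Rightarrow> complex) \<Rightarrow> nat \<Rightarrow> nat \<Rightarrow> complex" where
  "choi n A a c = A a c / complex_of_real (sqrt (2^n))"

text \<open>Probability of Bell-basis outcome x when measuring |v(U)>: |<v(sigma_x)|v(U)>|^2.\<close>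
definition bell_prob :: "nat \<Rightarrow> (nat \<Rightarrow> nat \<Rightarrow> complex) \<Rightarrow> nat list \<Rightarrow> real" where
  "bell_prob n U x = (cmod (\<Sum>a<2^n. \<Sum>c<2^n. cnj (choi n (pauli n x) a c) * choi n U a c))^2"

text \<open>Output of the procedure on the outcome sequence xs (t independent measurements).\<close>
definition out_set :: "nat list list \<Rightarrow> nat set" where
  "out_set xs = (\<Union>x\<in>set xs. supp x)"

definition good_output :: "nat \<Rightarrow> (nat \<Rightarrow> nat \<Rightarrow> complex) \<Rightarrow> real \<Rightarrow> nat set \<Rightarrow> bool" where
  "good_output n U \<epsilon> S \<longleftrightarrow>
     S \<subseteq> {..<n} \<and> {i. i < n \<and> Inf n U i \<ge> \<epsilon>} \<subseteq> S \<and> (\<forall>i\<in>S. Inf n U i > 0)"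

definition success_prob :: "nat \<Rightarrow> (nat \<Rightarrow> nat \<Rightarrow> complex) \<Rightarrow> real \<Rightarrow> nat \<Rightarrow> real" where
  "success_prob n U \<epsilon> t =
     (\<Sum>xs\<in>{xs. length xs = t \<and> set xs \<subseteq> pstrings n}.
        (\<Prod>x\<leftarrow>xs. bell_prob n U x) * (if good_output n U \<epsilon> (out_set xs) then 1 else 0))"

end

theory Submission
  imports Defs
begin

text \<open>Measuring \<open>|v(U)\<rangle>\<close> in the Bell basis returns \<open>x\<close> with probability \<open>|\<hat>U(x)|\<^sup>2\<close>,
  and these probabilities sum to 1 by Parseval. A qubit \<open>i\<close> in the support of an outcome of
  positive probability therefore has \<open>Inf\<^sub>i[U] > 0\<close>, and all \<open>t\<close> outcomes miss \<open>i\<close> with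
  probability \<open>(1 - Inf\<^sub>i[U])\<^sup>t \<le> e\<^sup>-\<^sup>\<epsilon>\<^sup>t\<close> when \<open>Inf\<^sub>i[U] \<ge> \<epsilon>\<close>.
  For a qubit \<open>i \<notin> R\<close>, flipping bit \<open>i\<close> of both indices in the trace defining \<open>\<hat>U(x)\<close> fixes
  the entries of \<open>U\<close>, which vanish unless the two indices agree on bit \<open>i\<close>, and negates the
  diagonal entries of every non-identity Pauli; so \<open>\<hat>U(x) = 0\<close> if \<open>x\<^sub>i \<noteq> 0\<close>, and only qubits
  in \<open>R\<close> can be influential. A union bound over at most \<open>|R|\<close> such qubits bounds the failure
  probability by \<open>|R| e\<^sup>-\<^sup>\<epsilon>\<^sup>t \<le> e\<^sup>-\<^sup>2 < 1/3\<close> once \<open>\<epsilon>t \<ge> 2(1 + ln |R|)\<close>.\<close>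

lemma qbit_eq_bit: "qbit a i = (if bit a i then 1 else 0)"
  unfolding qbit_def by (simp add: bit_iff_odd odd_iff_mod_2_eq_one)

lemma qbit_less_2: "qbit a i < 2"
  by (simp add: qbit_eq_bit)

lemma eq_if_qbit_eq:
  assumes "a < 2 ^ n" "b < 2 ^ n" "\<And>i. i < n \<Longrightarrow> qbit a i = qbit b i"
  shows "a = b"
proof -
  have "take_bit n a = a" "take_bit n b = b"
    using assms(1,2) by (simp_all add: take_bit_nat_eq_self_iff)
  moreover have "bit (take_bit n a) j = bit (take_bit n b) j" for j
    using assms(3)[of j] by (cases "j < n") (auto simp: bit_take_bit_iff qbit_eq_bit split: if_splits)
  ultimately show ?thesis by (metis bit_eqI)
qed

lemma flip_bit_less_power:
  assumes "a < 2 ^ n" "i < n"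
  shows "flip_bit i a < (2::nat) ^ n"
proof -
  have "take_bit n a = a"
    using assms(1) by (simp add: take_bit_nat_eq_self_iff)
  then have "take_bit n (flip_bit i a) = flip_bit i a"
    using assms(2) by (simp add: take_bit_flip_bit_eq)
  then show ?thesis by (simp add: take_bit_nat_eq_self_iff)
qed

lemma qbit_flip_bit: "qbit (flip_bit i a) j = (if j = i then 1 - qbit a j else qbit a j)"
  by (simp add: qbit_eq_bit bit_flip_bit_iff)

lemma flip_bit_flip_bit: "flip_bit i (flip_bit i a) = (a::nat)"
  by (rule bit_eqI) (auto simp: bit_flip_bit_iff)

lemma lists_length_Suc_eq:
  "{xs. length xs = Suc t \<and> set xs \<subseteq> A} =
     (\<lambda>(x, ys). x # ys) ` (A \<times> {xs. length xs = t \<and> set xs \<subseteq> A})"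
proof (rule set_eqI)
  fix xs show "xs \<in> {xs. length xs = Suc t \<and> set xs \<subseteq> A} \<longleftrightarrow>
      xs \<in> (\<lambda>(x, ys). x # ys) ` (A \<times> {xs. length xs = t \<and> set xs \<subseteq> A})"
    by (cases xs) auto
qed

lemma sum_prod_list_lists_length:
  fixes p :: "'a \<Rightarrow> 'b::comm_semiring_1"
  assumes "finite A"
  shows "(\<Sum>xs\<in>{xs. length xs = t \<and> set xs \<subseteq> A}. prod_list (map p xs)) = sum p A ^ t"
proof (induction t)
  case 0
  have "{xs. length xs = 0 \<and> set xs \<subseteq> A} = {[]}" by auto
  then show ?case by simp
next
  case (Suc t)
  let ?L = "{xs. length xs = t \<and> set xs \<subseteq> A}"
  have inj: "inj_on (\<lambda>(x, ys). x # ys) (A \<times> ?L)" by (auto simp: inj_on_def)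
  have "(\<Sum>xs\<in>{xs. length xs = Suc t \<and> set xs \<subseteq> A}. prod_list (map p xs))
      = (\<Sum>x\<in>A. \<Sum>ys\<in>?L. p x * prod_list (map p ys))"
    unfolding lists_length_Suc_eq sum.cartesian_product
    by (subst sum.reindex[OF inj]) (simp add: case_prod_unfold)
  also have "\<dots> = sum p A * sum p A ^ t"
    using Suc by (simp add: sum_distrib_left[symmetric] sum_distrib_right)
  finally show ?case by simp
qed

lemma pstrings_eq_lists: "pstrings n = {xs. length xs = n \<and> set xs \<subseteq> {..<4}}"
  by (auto simp: pstrings_def)

lemma pstrings_Suc: "pstrings (Suc n) = (\<lambda>(k, xs). k # xs) ` ({..<4} \<times> pstrings n)"
  unfolding pstrings_eq_lists by (rule lists_length_Suc_eq)

lemma finite_pstrings: "finite (pstrings n)"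
  using finite_lists_length_eq[of "{..<4::nat}" n] by (simp add: pstrings_eq_lists conj_commute)

lemma sum_pstrings_prod:
  fixes f :: "nat \<Rightarrow> nat \<Rightarrow> 'b::comm_semiring_1"
  shows "(\<Sum>x\<in>pstrings n. \<Prod>i<n. f i (x ! i)) = (\<Prod>i<n. \<Sum>k<4. f i k)"
proof (induction n arbitrary: f)
  case 0
  have "pstrings 0 = {[]}" unfolding pstrings_def by auto
  then show ?case by simp
next
  case (Suc n)
  have inj: "inj_on (\<lambda>(k, xs). k # xs) ({..<4::nat} \<times> pstrings n)" by (auto simp: inj_on_def)
  have "(\<Sum>x\<in>pstrings (Suc n). \<Prod>i<Suc n. f i (x ! i))
      = (\<Sum>k<4. \<Sum>xs\<in>pstrings n. f 0 k * (\<Prod>i<n. f (Suc i) (xs ! i)))"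
    unfolding pstrings_Suc sum.cartesian_product
    by (subst sum.reindex[OF inj]) (simp add: case_prod_unfold prod.lessThan_Suc_shift del: prod.lessThan_Suc)
  also have "\<dots> = (\<Sum>k<4. f 0 k) * (\<Prod>i<n. \<Sum>k<4. f (Suc i) k)"
    using Suc[of "\<lambda>i. f (Suc i)"] by (simp add: sum_distrib_left[symmetric] sum_distrib_right)
  also have "\<dots> = (\<Prod>i<Suc n. \<Sum>k<4. f i k)"
    by (simp add: prod.lessThan_Suc_shift del: prod.lessThan_Suc)
  finally show ?case .
qed

lemma sum_cnj_pauli1_mult:
  assumes "r < 2" "c < 2" "r' < 2" "c' < 2"
  shows "(\<Sum>k<4. cnj (pauli1 k r c) * pauli1 k r' c') = (if r = r' \<and> c = c' then 2 else 0)"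
proof -
  have "(\<Sum>k<4::nat. f k) = f 0 + f 1 + f 2 + (f 3::complex)" for f
    by (simp add: eval_nat_numeral)
  moreover have "r \<in> {0, 1}" "c \<in> {0, 1}" "r' \<in> {0, 1}" "c' \<in> {0, 1}"
    using assms by auto
  ultimately show ?thesis by (auto simp: pauli1_def)
qed

lemma sum_cnj_pauli_mult:
  assumes "a < 2 ^ n" "b < 2 ^ n" "a' < 2 ^ n" "b' < 2 ^ n"
  shows "(\<Sum>x\<in>pstrings n. cnj (pauli n x a b) * pauli n x a' b') =
    (if a = a' \<and> b = b' then 2 ^ n else 0)"
proof -
  have "(\<Sum>x\<in>pstrings n. cnj (pauli n x a b) * pauli n x a' b')
     = (\<Prod>i<n. \<Sum>k<4. cnj (pauli1 k (qbit a i) (qbit b i)) * pauli1 k (qbit a' i) (qbit b' i))"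
    unfolding pauli_def cnj_prod prod.distrib[symmetric] by (rule sum_pstrings_prod)
  also have "\<dots> = (\<Prod>i<n. if qbit a i = qbit a' i \<and> qbit b i = qbit b' i then 2 else 0)"
    by (simp add: sum_cnj_pauli1_mult qbit_less_2)
  also have "\<dots> = (if a = a' \<and> b = b' then 2 ^ n else 0)"
    using eq_if_qbit_eq[of a n a'] eq_if_qbit_eq[of b n b'] assms by auto
  finally show ?thesis .
qed

lemma sum_norm_fourier_square:
  "(\<Sum>x\<in>pstrings n. (cmod (fourier n U x))\<^sup>2) = (\<Sum>a<2^n. \<Sum>b<2^n. (cmod (U a b))\<^sup>2) / 2 ^ n"
proof -
  define N :: complex where "N = 2 ^ n"
  define I where "I = {..<2^n::nat} \<times> {..<2^n::nat}"
  define g where "g x p = cnj (pauli n x (fst p) (snd p)) * U (fst p) (snd p)" for x p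
  have fourier_eq: "fourier n U x = (\<Sum>p\<in>I. g x p) / N" for x
    unfolding fourier_def g_def I_def N_def
    by (subst sum.swap) (simp add: sum.cartesian_product case_prod_unfold)
  have "(\<Sum>x\<in>pstrings n. (\<Sum>p\<in>I. g x p) * cnj (\<Sum>q\<in>I. g x q))
      = (\<Sum>p\<in>I. \<Sum>q\<in>I. \<Sum>x\<in>pstrings n. g x p * cnj (g x q))"
    by (simp add: sum_product cnj_sum sum.swap[of _ "pstrings n"] sum.swap[of _ "pstrings n" I])
  also have "\<dots> = (\<Sum>p\<in>I. \<Sum>q\<in>I.
      (\<Sum>x\<in>pstrings n. cnj (pauli n x (fst p) (snd p)) * pauli n x (fst q) (snd q))
        * (U (fst p) (snd p) * cnj (U (fst q) (snd q))))"
    unfolding g_def by (simp add: sum_distrib_left sum_distrib_right mult_ac)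
  also have "\<dots> = (\<Sum>p\<in>I. \<Sum>q\<in>I. (if p = q then N else 0) * (U (fst p) (snd p) * cnj (U (fst q) (snd q))))"
    by (intro sum.cong refl) (auto simp: I_def N_def sum_cnj_pauli_mult prod_eq_iff)
  also have "\<dots> = (\<Sum>p\<in>I. N * (U (fst p) (snd p) * cnj (U (fst p) (snd p))))"
    by (simp add: I_def if_distrib[of "\<lambda>z. z * _"] sum.delta cong: if_cong)
  finally have "(\<Sum>x\<in>pstrings n. fourier n U x * cnj (fourier n U x))
      = (\<Sum>p\<in>I. U (fst p) (snd p) * cnj (U (fst p) (snd p))) / N"
    unfolding fourier_eq by (simp add: sum_divide_distrib[symmetric] sum_distrib_left[symmetric] N_def power2_eq_square)
  then have "complex_of_real (\<Sum>x\<in>pstrings n. (cmod (fourier n U x))\<^sup>2)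
      = complex_of_real ((\<Sum>a<2^n. \<Sum>b<2^n. (cmod (U a b))\<^sup>2) / 2 ^ n)"
    unfolding I_def N_def sum.cartesian_product case_prod_unfold of_real_sum of_real_divide complex_norm_square
    by simp
  then show ?thesis by (rule of_real_eq_iff[THEN iffD1])
qed

lemma unitary_sum_norm_square:
  assumes "unitary n U"
  shows "(\<Sum>a<2^n. \<Sum>b<2^n. (cmod (U a b))\<^sup>2) = 2 ^ n"
proof -
  have "complex_of_real (\<Sum>a<2^n. \<Sum>b<2^n. (cmod (U a b))\<^sup>2) = (\<Sum>b<2^n. \<Sum>a<2^n. cnj (U a b) * U a b)"
    unfolding of_real_sum complex_norm_square by (subst sum.swap) (simp only: mult.commute)
  also have "\<dots> = (\<Sum>b<2^n::nat. 1)"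
    using assms unfolding unitary_def by (intro sum.cong) auto
  finally have "complex_of_real (\<Sum>a<2^n. \<Sum>b<2^n. (cmod (U a b))\<^sup>2) = complex_of_real (2 ^ n)"
    by simp
  then show ?thesis by (simp only: of_real_eq_iff)
qed

lemma bell_prob_eq_norm_fourier_square: "bell_prob n U x = (cmod (fourier n U x))\<^sup>2"
proof -
  have s: "complex_of_real (sqrt (2 ^ n)) * complex_of_real (sqrt (2 ^ n)) = 2 ^ n"
    by (simp flip: of_real_mult)
  have "cnj (choi n (pauli n x) a c) * choi n U a c = cnj (pauli n x a c) * U a c / 2 ^ n" for a c
    unfolding choi_def complex_cnj_divide complex_cnj_complex_of_real times_divide_times_eq s ..
  then have "(\<Sum>a<2^n. \<Sum>c<2^n. cnj (choi n (pauli n x) a c) * choi n U a c) = fourier n U x"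
    unfolding fourier_def sum_divide_distrib by (subst sum.swap) simp
  then show ?thesis unfolding bell_prob_def by simp
qed

lemma sum_bell_prob:
  assumes "unitary n U"
  shows "(\<Sum>x\<in>pstrings n. bell_prob n U x) = 1"
  unfolding bell_prob_eq_norm_fourier_square sum_norm_fourier_square unitary_sum_norm_square[OF assms]
  by simp

lemma Inf_eq_sum_bell_prob: "Inf n U i = (\<Sum>x\<in>{x\<in>pstrings n. x ! i \<noteq> 0}. bell_prob n U x)"
  unfolding Inf_def bell_prob_eq_norm_fourier_square ..

lemma acts_only_on_flip_bit:
  assumes "acts_only_on n U R" "i < n" "i \<notin> R" "a < 2 ^ n" "b < 2 ^ n"
  shows "U (flip_bit i a) (flip_bit i b) = U a b"
proof -
  obtain V where V: "\<And>a b. a < 2 ^ n \<Longrightarrow> b < 2 ^ n \<Longrightarrow>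
      U a b = V (\<lambda>j. if j \<in> R then qbit a j else 0) (\<lambda>j. if j \<in> R then qbit b j else 0)
        * (if \<forall>j<n. j \<notin> R \<longrightarrow> qbit a j = qbit b j then 1 else 0)"
    using assms(1) unfolding acts_only_on_def by blast
  have "(\<lambda>j. if j \<in> R then qbit (flip_bit i c) j else 0) = (\<lambda>j. if j \<in> R then qbit c j else 0)" for c
    using assms(3) by (auto simp: qbit_flip_bit)
  moreover have "qbit (flip_bit i a) j = qbit (flip_bit i b) j \<longleftrightarrow> qbit a j = qbit b j" for j
    using qbit_less_2[of a i] qbit_less_2[of b i] by (auto simp: qbit_flip_bit)
  ultimately show ?thesis
    using V[of a b] V[of "flip_bit i a" "flip_bit i b"] assms(2,4,5) by (simp add: flip_bit_less_power)
qed

lemma acts_only_on_qbit_eq: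
  assumes "acts_only_on n U R" "i < n" "i \<notin> R" "a < 2 ^ n" "b < 2 ^ n" "U a b \<noteq> 0"
  shows "qbit a i = qbit b i"
  using assms unfolding acts_only_on_def by (auto split: if_splits)

lemma pauli1_neg_diag: "k \<noteq> 0 \<Longrightarrow> r < 2 \<Longrightarrow> pauli1 k (1 - r) (1 - r) = - pauli1 k r r"
  by (auto simp: pauli1_def less_2_cases_iff)

lemma pauli_flip_bit:
  assumes "i < n" "x ! i \<noteq> 0" "qbit a i = qbit b i"
  shows "pauli n x (flip_bit i a) (flip_bit i b) = - pauli n x a b"
proof -
  have split: "pauli n x c d =
      pauli1 (x ! i) (qbit c i) (qbit d i) * (\<Prod>j\<in>{..<n} - {i}. pauli1 (x ! j) (qbit c j) (qbit d j))"
    for c d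
    unfolding pauli_def using assms(1) by (simp add: prod.remove)
  have "(\<Prod>j\<in>{..<n} - {i}. pauli1 (x ! j) (qbit (flip_bit i a) j) (qbit (flip_bit i b) j)) =
      (\<Prod>j\<in>{..<n} - {i}. pauli1 (x ! j) (qbit a j) (qbit b j))"
    by (intro prod.cong) (auto simp: qbit_flip_bit)
  moreover have "pauli1 (x ! i) (qbit (flip_bit i a) i) (qbit (flip_bit i b) i) =
      - pauli1 (x ! i) (qbit a i) (qbit b i)"
    using pauli1_neg_diag[OF assms(2) qbit_less_2[of b i]] assms(3) by (simp add: qbit_flip_bit)
  ultimately show ?thesis
    unfolding split[of "flip_bit i a"] split[of a] by simp
qed

lemma fourier_eq_0_if_outside:
  assumes "acts_only_on n U R" "i < n" "i \<notin> R" "x ! i \<noteq> 0"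
  shows "fourier n U x = 0"
proof -
  define G where "G a b = cnj (pauli n x b a) * U b a" for a b
  have flip: "G (flip_bit i a) (flip_bit i b) = - G a b" if "a < 2 ^ n" "b < 2 ^ n" for a b
  proof (cases "U b a = 0")
    case True
    then show ?thesis unfolding G_def using acts_only_on_flip_bit[OF assms(1-3)] that by simp
  next
    case False
    then have "qbit b i = qbit a i" using acts_only_on_qbit_eq[OF assms(1-3)] that by blast
    then show ?thesis
      unfolding G_def using pauli_flip_bit[OF assms(2,4)] acts_only_on_flip_bit[OF assms(1-3)] that
      by simp
  qed
  have bij: "bij_betw (flip_bit i) {..<2^n} {..<2^n::nat}"
    by (rule bij_betw_byWitness[where f' = "flip_bit i"])
      (auto simp: flip_bit_flip_bit flip_bit_less_power assms(2))
  define S where "S = (\<Sum>a<2^n. \<Sum>b<2^n. G a b)"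
  have "S = (\<Sum>a<2^n. \<Sum>b<2^n. G (flip_bit i a) (flip_bit i b))"
    unfolding S_def
    by (simp add: sum.reindex_bij_betw[OF bij, of "\<lambda>b. G _ b"]
        sum.reindex_bij_betw[OF bij, of "\<lambda>a. \<Sum>b<2^n. G a b"])
  also have "\<dots> = - S" unfolding S_def by (simp add: flip sum_negf)
  finally have "S = 0" by simp
  then show ?thesis unfolding fourier_def S_def G_def by simp
qed

lemma Inf_eq_0_if_outside:
  assumes "acts_only_on n U R" "i < n" "i \<notin> R"
  shows "Inf n U i = 0"
  unfolding Inf_def using fourier_eq_0_if_outside[OF assms] by simp

lemma influential_subset:
  assumes "acts_only_on n U R" "\<epsilon> > 0"
  shows "{i. i < n \<and> Inf n U i \<ge> \<epsilon>} \<subseteq> R"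
  using Inf_eq_0_if_outside[OF assms(1)] assms(2) by force

lemma bell_prob_nonneg: "0 \<le> bell_prob n U x"
  by (simp add: bell_prob_def)

lemma bell_prob_le_Inf:
  assumes "x \<in> pstrings n" "i \<in> supp x"
  shows "bell_prob n U x \<le> Inf n U i"
  unfolding Inf_eq_sum_bell_prob
  by (rule member_le_sum) (use assms in \<open>auto simp: supp_def bell_prob_nonneg finite_pstrings\<close>)

lemma sum_bell_prob_nth_eq_0:
  assumes "unitary n U"
  shows "(\<Sum>x\<in>{x\<in>pstrings n. x ! i = 0}. bell_prob n U x) = 1 - Inf n U i"
proof -
  have "pstrings n = {x\<in>pstrings n. x ! i = 0} \<union> {x\<in>pstrings n. x ! i \<noteq> 0}" by auto
  then have "(\<Sum>x\<in>pstrings n. bell_prob n U x) =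
      (\<Sum>x\<in>{x\<in>pstrings n. x ! i = 0}. bell_prob n U x) + Inf n U i"
    unfolding Inf_eq_sum_bell_prob by (metis (no_types, lifting) sum.union_disjoint
        finite_pstrings finite_Un disjoint_iff mem_Collect_eq)
  then show ?thesis using sum_bell_prob[OF assms] by simp
qed

lemma Inf_le_1:
  assumes "unitary n U"
  shows "Inf n U i \<le> 1"
  using sum_bell_prob_nth_eq_0[OF assms, of i] sum_nonneg[of _ "bell_prob n U"] bell_prob_nonneg
  by (metis diff_ge_0_iff_ge)

lemma prob_all_nth_eq_0:
  assumes "unitary n U"
  shows "(\<Sum>xs\<in>{xs. length xs = t \<and> set xs \<subseteq> pstrings n}.
      if \<forall>x\<in>set xs. x ! i = 0 then prod_list (map (bell_prob n U) xs) else 0) = (1 - Inf n U i) ^ t"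
proof -
  have "finite {xs. length xs = t \<and> set xs \<subseteq> pstrings n}"
    using finite_lists_length_eq[OF finite_pstrings] by (simp add: conj_commute)
  then have "(\<Sum>xs\<in>{xs. length xs = t \<and> set xs \<subseteq> pstrings n}.
      if \<forall>x\<in>set xs. x ! i = 0 then prod_list (map (bell_prob n U) xs) else 0)
    = (\<Sum>xs\<in>{xs. length xs = t \<and> set xs \<subseteq> {x\<in>pstrings n. x ! i = 0}}. prod_list (map (bell_prob n U) xs))"
    by (simp add: sum.inter_filter[symmetric]) (intro sum.cong; auto)
  also have "\<dots> = (1 - Inf n U i) ^ t"
    by (simp add: sum_prod_list_lists_length finite_pstrings sum_bell_prob_nth_eq_0[OF assms])
  finally show ?thesis .
qed

lemma good_output_if_covers:
  assumes "set xs \<subseteq> pstrings n" "prod_list (map (bell_prob n U) xs) \<noteq> 0"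
    and "{i. i < n \<and> Inf n U i \<ge> \<epsilon>} \<subseteq> out_set xs"
  shows "good_output n U \<epsilon> (out_set xs)"
proof -
  have "out_set xs \<subseteq> {..<n}"
    using assms(1) by (auto simp: out_set_def supp_def pstrings_def)
  moreover have "Inf n U i > 0" if i: "i \<in> out_set xs" for i
  proof -
    obtain x where x: "x \<in> set xs" "i \<in> supp x"
      using i unfolding out_set_def by blast
    then have "0 < bell_prob n U x"
      using assms(2) bell_prob_nonneg[of n U x] by (auto simp: prod_list_zero_iff order_le_less)
    also have "\<dots> \<le> Inf n U i"
      using x assms(1) by (intro bell_prob_le_Inf) auto
    finally show ?thesis .
  qed
  ultimately show ?thesis
    using assms(3) unfolding good_output_def by blast
qed

lemma success_prob_ge_union_bound:
  assumes "unitary n U"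
  shows "1 - (\<Sum>i | i < n \<and> Inf n U i \<ge> \<epsilon>. (1 - Inf n U i) ^ t) \<le> success_prob n U \<epsilon> t"
proof -
  define X where "X = {xs. length xs = t \<and> set xs \<subseteq> pstrings n}"
  define B where "B = {i. i < n \<and> Inf n U i \<ge> \<epsilon>}"
  define P where "P xs = prod_list (map (bell_prob n U) xs)" for xs
  define miss where "miss i (xs :: nat list list) \<longleftrightarrow> (\<forall>x\<in>set xs. x ! i = 0)" for i xs
  have P_nonneg: "0 \<le> P xs" for xs
    unfolding P_def by (induction xs) (simp_all add: bell_prob_nonneg)
  have "P xs - (\<Sum>i\<in>B. if miss i xs then P xs else 0)
      \<le> P xs * (if good_output n U \<epsilon> (out_set xs) then 1 else 0)" if "xs \<in> X" for xs
  proof (cases "\<exists>i\<in>B. miss i xs")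
    case True
    then have "P xs \<le> (\<Sum>i\<in>B. if miss i xs then P xs else 0)"
      using member_le_sum[of _ B "\<lambda>i. if miss i xs then P xs else 0"] P_nonneg
      by (force simp: B_def)
    then show ?thesis using P_nonneg[of xs] by simp
  next
    case False
    have "B \<subseteq> out_set xs"
      using False \<open>xs \<in> X\<close> by (force simp: B_def miss_def X_def out_set_def supp_def pstrings_def)
    then have "P xs \<noteq> 0 \<Longrightarrow> good_output n U \<epsilon> (out_set xs)"
      using \<open>xs \<in> X\<close> good_output_if_covers unfolding B_def P_def X_def by blast
    then show ?thesis using False by (cases "P xs = 0") auto
  qed
  then have "(\<Sum>xs\<in>X. P xs - (\<Sum>i\<in>B. if miss i xs then P xs else 0)) \<le> success_prob n U \<epsilon> t"
    unfolding success_prob_def X_def[symmetric] P_def[symmetric] by (rule sum_mono)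
  moreover have "sum P X = 1"
    unfolding P_def X_def by (simp add: sum_prod_list_lists_length finite_pstrings sum_bell_prob[OF assms])
  moreover have "(\<Sum>xs\<in>X. if miss i xs then P xs else 0) = (1 - Inf n U i) ^ t" for i
    unfolding X_def P_def miss_def by (rule prob_all_nth_eq_0[OF assms])
  ultimately show ?thesis
    unfolding B_def[symmetric] by (simp add: sum_subtractf sum.swap[of _ B X])
qed

lemma power_le_exp_neg:
  fixes y \<epsilon> :: real
  assumes "0 \<le> y" "y \<le> 1 - \<epsilon>"
  shows "y ^ t \<le> exp (- (\<epsilon> * t))"
proof -
  have "y ^ t \<le> exp (- \<epsilon>) ^ t"
    using assms exp_ge_add_one_self[of "- \<epsilon>"] by (intro power_mono) auto
  then show ?thesis by (simp add: exp_of_nat_mult[symmetric] mult.commute)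
qed

lemma sum_power_le_one_third:
  fixes q :: "'a \<Rightarrow> real"
  assumes "finite R" "B \<subseteq> R" "\<And>i. i \<in> B \<Longrightarrow> 0 \<le> q i \<and> q i \<le> 1 - \<epsilon>"
    and "2 * (1 + ln (card R)) \<le> \<epsilon> * t"
  shows "(\<Sum>i\<in>B. q i ^ t) \<le> 1/3"
proof (cases "B = {}")
  case False
  have "card B \<le> card R" using assms(1,2) by (rule card_mono)
  moreover have "card B \<ge> 1"
    using False assms(1,2) finite_subset by (fastforce simp: Suc_le_eq card_gt_0_iff)
  ultimately have R_ge_1: "real (card R) \<ge> 1" and "real (card B) \<le> card R" by auto
  have "(\<Sum>i\<in>B. q i ^ t) \<le> card B * exp (- (\<epsilon> * t))"
    using sum_bounded_above[of B "\<lambda>i. q i ^ t"] assms(3) power_le_exp_neg by force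
  also have "\<dots> \<le> card R * exp (- (2 + ln (card R)))"
  proof (rule mult_mono)
    have "2 + ln (card R) \<le> \<epsilon> * real t"
      using assms(4) ln_ge_zero[OF R_ge_1] by (simp add: ring_distribs)
    then show "exp (- (\<epsilon> * t)) \<le> exp (- (2 + ln (card R)))" by simp
  qed (use \<open>real (card B) \<le> card R\<close> in auto)
  also have "\<dots> = exp (- 2)"
    using R_ge_1 by (simp add: exp_diff exp_minus)
  also have "\<dots> \<le> 1/3"
    using exp_ge_add_one_self[of 2] by (simp add: exp_minus field_simps)
  finally show ?thesis .
qed simp

theorem mainTheorem10:
  shows "\<exists>C::real. C > 0 \<and>
    (\<forall>n (U :: nat \<Rightarrow> nat \<Rightarrow> complex) (R :: nat set) (\<epsilon>::real) (t::nat).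
       unitary n U \<longrightarrow> R \<subseteq> {..<n} \<longrightarrow> acts_only_on n U R \<longrightarrow> \<epsilon> > 0 \<longrightarrow>
       real t \<ge> C * (1 + ln (real (card R))) / \<epsilon> \<longrightarrow>
       success_prob n U \<epsilon> t \<ge> 2/3)"
proof (intro exI[of _ "2::real"] conjI allI impI)
  fix n U R \<epsilon> t
  assume U: "unitary n U" and R: "R \<subseteq> {..<n}" "acts_only_on n U R" and \<epsilon>: "(\<epsilon>::real) > 0"
    and t: "real t \<ge> 2 * (1 + ln (real (card R))) / \<epsilon>"
  have "(\<Sum>i | i < n \<and> Inf n U i \<ge> \<epsilon>. (1 - Inf n U i) ^ t) \<le> 1/3"
  proof (rule sum_power_le_one_third)
    show "finite R" using R(1) finite_subset by blast
    show "{i. i < n \<and> Inf n U i \<ge> \<epsilon>} \<subseteq> R" using R(2) \<epsilon> by (rule influential_subset)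
    show "0 \<le> 1 - Inf n U i \<and> 1 - Inf n U i \<le> 1 - \<epsilon>" if "i \<in> {i. i < n \<and> Inf n U i \<ge> \<epsilon>}" for i
      using that Inf_le_1[OF U] by auto
    show "2 * (1 + ln (card R)) \<le> \<epsilon> * t" using t \<epsilon> by (simp add: pos_divide_le_eq mult.commute)
  qed
  then show "success_prob n U \<epsilon> t \<ge> 2/3"
    using success_prob_ge_union_bound[OF U, where \<epsilon> = \<epsilon> and t = t] by simp
qed simp

end
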